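(* Let $\delta\in[1/3,1]$, let $\nu_-,\nu_+>0$ be fixed constants and $a_\pm=\left(\frac{(1+\delta^2)\delta}{8\nu_\pm^2}\right)^{2/5}$. Consider the fourth-order ODE $$\frac{d^{4}\overline{A_0}}{dz^{4}}=-\overline{A_0}\,(\overline{A_0}^{2}+z)$$ with data at $z=a_+$ given, for a parameter $(\overline{x_{10}},\overline{x_{20}})\in\mathbb{R}^2$, by $$\overline{A_0}=a_+^{1/2}\overline{x_{10}},\quad \overline{A_0}'=-\frac{a_+^{3/4}}{\sqrt2}(\overline{x_{10}}+\overline{x_{20}}),\quad \overline{A_0}''=a_+\overline{x_{20}},\quad \overline{A_0}'''=\frac{a_+^{5/4}}{\sqrt2}(\overline{x_{10}}-\overline{x_{20}}).$$ Then for $k_1>0$ small enough and $|(\overline{x_{10}},\overline{x_{20}})|\le k_1$, the corresponding solutions exist on the whole interval $z\in[-a_-,a_+]$, forming a 2-parameter family (parameter $(\overline{x_{10}},\overline{x_{20}})$); these solutions depend analytically on $\delta\in[1/3,1]$. *)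

theory Defs
  imports "HOL-Analysis.Analysis"
begin

definition a_scale :: "real \<Rightarrow> real \<Rightarrow> real" where
  "a_scale \<delta> \<nu> = ((1 + \<delta>\<^sup>2) * \<delta> / (8 * \<nu>\<^sup>2)) powr (2/5)"

definition solves_on :: "(real \<Rightarrow> real) \<Rightarrow> (real \<Rightarrow> real) \<Rightarrow> (real \<Rightarrow> real)
    \<Rightarrow> (real \<Rightarrow> real) \<Rightarrow> real set \<Rightarrow> bool" where
  "solves_on A A1 A2 A3 I \<longleftrightarrow>
     (\<forall>z\<in>I. (A has_real_derivative A1 z) (at z within I)
          \<and> (A1 has_real_derivative A2 z) (at z within I)
          \<and> (A2 has_real_derivative A3 z) (at z within I)
          \<and> (A3 has_real_derivative (- A z * ((A z)\<^sup>2 + z))) (at z within I))"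

definition real_analytic_at :: "(real \<Rightarrow> real) \<Rightarrow> real \<Rightarrow> bool" where
  "real_analytic_at f x0 \<longleftrightarrow>
     (\<exists>r>0. \<exists>c::nat \<Rightarrow> real. \<forall>y. \<bar>y - x0\<bar> < r \<longrightarrow> (\<lambda>n. c n * (y - x0) ^ n) sums f y)"

end

(*
  Around the initial point p = a_+ the equation reads A'''' = -(A^3 + p A + (z - p) A), so the
  Taylor coefficients of the solution at p obey a recurrence in which c_(n+4) is divided by
  (n+1)(n+2)(n+3)(n+4).  For small data an induction gives |c_n| <= C N^min(n,N) / \<rho>^n: during
  the first N steps the weight may grow by the factor N, which absorbs the linear terms, afterwards
  the factorial denominator does, and the smallness of C controls the cubic term.  Hence the series
  converges for |z - p| < \<rho>, and \<rho> is chosen larger than a_+ + a_-.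
  The coefficients are polynomials in p and the data, which extend holomorphically to complex \<delta>
  near [1/3, 1] with the same bounds; by the Weierstrass M-test the solution at a fixed z is then
  holomorphic, hence real analytic, in \<delta>.
*)
theory Submission
  imports Defs "HOL-Complex_Analysis.Cauchy_Integral_Formula"
begin

section \<open>Taylor coefficients of the solution\<close>

(* Taylor coefficients at z = p of the solution whose derivatives at p are d 0, ..., d 3. *)
function ode_coeff :: "'a::real_normed_field \<Rightarrow> (nat \<Rightarrow> 'a) \<Rightarrow> nat \<Rightarrow> 'a" where
  "ode_coeff p d n =
     (if n < 4 then d n / fact n
      else - ((\<Sum>i\<le>n-4. ode_coeff p d i * (\<Sum>j\<le>n-4-i. ode_coeff p d j * ode_coeff p d (n-4-i-j)))
              + p * ode_coeff p d (n-4) + (if n = 4 then 0 else ode_coeff p d (n-5)))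
           / pochhammer (of_nat (n-3)) 4)"
  by auto
termination by (relation "Wellfounded.measure (\<lambda>(p, d, n). n)") auto

declare ode_coeff.simps [simp del]

definition ode_fps :: "'a::real_normed_field \<Rightarrow> (nat \<Rightarrow> 'a) \<Rightarrow> 'a fps" where
  "ode_fps p d = Abs_fps (ode_coeff p d)"

lemma ode_coeff_initial: "n < 4 \<Longrightarrow> ode_coeff p d n = d n / fact n"
  by (simp add: ode_coeff.simps)

lemma ode_coeff_add_4:
  "ode_coeff p d (n + 4)
     = - ((\<Sum>i\<le>n. ode_coeff p d i * (\<Sum>j\<le>n-i. ode_coeff p d j * ode_coeff p d (n-i-j)))
          + p * ode_coeff p d n + (if n = 0 then 0 else ode_coeff p d (n-1)))
       / pochhammer (of_nat (n+1)) 4"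
  by (subst ode_coeff.simps) (simp add: numeral_eq_Suc)

lemma fps_cube_nth:
  fixes f :: "'a::comm_semiring_1 fps"
  shows "fps_nth (f ^ 3) n = (\<Sum>i\<le>n. fps_nth f i * (\<Sum>j\<le>n-i. fps_nth f j * fps_nth f (n-i-j)))"
  by (simp add: numeral_3_eq_3 fps_mult_nth atLeast0AtMost)

lemma pochhammer_of_nat_Suc_neq_0: "pochhammer (of_nat (Suc n) :: 'a::field_char_0) k \<noteq> 0"
  by (metis pochhammer_of_nat of_nat_eq_0_iff pochhammer_pos zero_less_Suc less_numeral_extra(3))

lemma ode_coeff_recurrence:
  "pochhammer (of_nat (n+1)) 4 * ode_coeff p d (n+4)
     = - (fps_nth (ode_fps p d ^ 3) n + p * ode_coeff p d n + fps_nth (fps_X * ode_fps p d) n)"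
proof -
  have "pochhammer (of_nat (n+1)) 4 \<noteq> (0::'a)"
    using pochhammer_of_nat_Suc_neq_0 by simp
  then show ?thesis
    by (simp add: ode_coeff_add_4 fps_cube_nth ode_fps_def)
qed

lemma fps_nth_higher_deriv:
  "fps_nth ((fps_deriv ^^ k) f) n = pochhammer (of_nat (Suc n)) k * fps_nth f (n + k)"
  by (induction k arbitrary: n) (simp_all add: pochhammer_rec add_ac mult_ac)

lemma ode_fps_solves_ode:
  "(fps_deriv ^^ 4) (ode_fps p d)
     = - (ode_fps p d ^ 3 + fps_const p * ode_fps p d + fps_X * ode_fps p d)"
  by (rule fps_ext) (simp add: fps_nth_higher_deriv ode_coeff_recurrence[simplified] ode_fps_def)

lemma ode_coeff_of_real:
  "ode_coeff (of_real p) (\<lambda>k. of_real (d k)) n = (of_real (ode_coeff p d n) :: 'a::real_normed_field)"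
proof (induction n rule: less_induct)
  case (less n)
  show ?case
  proof (cases "n < 4")
    case True
    then show ?thesis
      by (simp add: ode_coeff_initial)
  next
    case False
    then obtain m where n: "n = m + 4"
      by (metis add.commute le_Suc_ex not_less)
    have IH: "ode_coeff (of_real p) (\<lambda>k. of_real (d k)) i = (of_real (ode_coeff p d i) :: 'a)"
      if "i \<le> m" for i
      using less that n by simp
    have "pochhammer (of_nat (m + 1)) 4 = (of_real (pochhammer (of_nat (m + 1)) 4) :: 'a)"
      by (simp flip: pochhammer_of_real)
    moreover have "(\<Sum>i\<le>m. ode_coeff (of_real p) (\<lambda>k. of_real (d k)) i
        * (\<Sum>j\<le>m-i. ode_coeff (of_real p) (\<lambda>k. of_real (d k)) j
                    * ode_coeff (of_real p) (\<lambda>k. of_real (d k)) (m-i-j)))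
      = (of_real (\<Sum>i\<le>m. ode_coeff p d i * (\<Sum>j\<le>m-i. ode_coeff p d j * ode_coeff p d (m-i-j))) :: 'a)"
      unfolding of_real_sum of_real_mult by (intro sum.cong refl) (simp add: IH)
    ultimately show ?thesis
      unfolding n ode_coeff_add_4 using IH[of m] IH[of "m - 1"] by (simp add: of_real_divide)
  qed
qed

lemma holomorphic_on_ode_coeff:
  assumes "P holomorphic_on U" and "\<And>k. k < 4 \<Longrightarrow> (\<lambda>x. D x k) holomorphic_on U"
  shows "(\<lambda>x. ode_coeff (P x) (D x) n) holomorphic_on U"
proof (induction n rule: less_induct)
  case (less n)
  show ?case
  proof (cases "n < 4")
    case True
    then show ?thesis
      using assms(2) by (simp add: ode_coeff_initial holomorphic_intros)
  next
    case False
    then obtain m where n: "n = m + 4"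
      by (metis add.commute le_Suc_ex not_less)
    have IH: "(\<lambda>x. ode_coeff (P x) (D x) i) holomorphic_on U" if "i \<le> m" for i
      using less that n by simp
    have "(\<lambda>x. if m = 0 then 0 else ode_coeff (P x) (D x) (m - 1)) holomorphic_on U"
      using IH[of "m - 1"] by (cases "m = 0") auto
    then show ?thesis
      unfolding n ode_coeff_add_4 using pochhammer_of_nat_Suc_neq_0[of m 4]
      by (intro holomorphic_intros assms(1) IH) auto
  qed
qed

section \<open>A majorant for the coefficients\<close>

definition majorant_constants :: "real \<Rightarrow> real \<Rightarrow> nat \<Rightarrow> real \<Rightarrow> bool" where
  "majorant_constants \<rho> \<alpha> N C \<longleftrightarrow>
     1 \<le> \<rho> \<and> 3 * \<rho>^5 * (\<alpha> + 1) \<le> real N \<and> 0 \<le> C \<and> 3 * C^2 * real N ^ (3*N) * \<rho>^4 \<le> 1"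

definition coeff_weight :: "nat \<Rightarrow> real \<Rightarrow> nat \<Rightarrow> real" where
  "coeff_weight N \<rho> n = real N ^ min n N / \<rho> ^ n"

lemma majorant_constants_exist:
  assumes "1 \<le> \<rho>"
  shows "\<exists>N C. majorant_constants \<rho> \<alpha> N C \<and> 0 < C"
proof -
  define N where "N = nat \<lceil>3 * \<rho>^5 * (\<alpha> + 1)\<rceil>"
  define X where "X = real N ^ (3*N) * \<rho>^4"
  define C where "C = 1 / (3 * X)"
  have "1 \<le> real N ^ (3*N)"
    by (cases "N = 0") (auto intro: one_le_power)
  moreover have "1 \<le> \<rho>^4"
    using assms by (simp add: one_le_power)
  ultimately have X: "1 * 1 \<le> X"
    unfolding X_def by (intro mult_mono) auto
  have "3 * C^2 * real N ^ (3*N) * \<rho>^4 = C * (3 * C * X)"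
    by (simp add: X_def power2_eq_square mult_ac)
  also have "3 * C * X = 1"
    using X by (simp add: C_def)
  finally have "3 * C^2 * real N ^ (3*N) * \<rho>^4 = C"
    by simp
  moreover have "0 < C" "C \<le> 1"
    using X by (simp_all add: C_def)
  moreover have "3 * \<rho>^5 * (\<alpha> + 1) \<le> real N"
    unfolding N_def by (rule real_nat_ceiling_ge)
  ultimately show ?thesis
    using assms by (intro exI[of _ N] exI[of _ C]) (auto simp: majorant_constants_def)
qed

lemma majorant_constantsD:
  assumes "majorant_constants \<rho> \<alpha> N C" and "0 \<le> \<alpha>"
  shows "1 \<le> \<rho>" "0 \<le> C" "3 * C^2 * real N ^ (3*N) * \<rho>^4 \<le> 1" "3 * \<rho>^5 * (\<alpha> + 1) \<le> real N"
    "3 * \<rho>^5 \<le> real N" "1 \<le> N"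
proof -
  show \<rho>: "1 \<le> \<rho>" and "0 \<le> C" and "3 * C^2 * real N ^ (3*N) * \<rho>^4 \<le> 1"
    and N: "3 * \<rho>^5 * (\<alpha> + 1) \<le> real N"
    using assms(1) by (auto simp: majorant_constants_def)
  have "3 * \<rho>^5 \<le> 3 * \<rho>^5 * (\<alpha> + 1)"
    using \<rho> \<open>0 \<le> \<alpha>\<close> by (simp add: mult_le_cancel_left1)
  with N show N3: "3 * \<rho>^5 \<le> real N"
    by linarith
  have "1 \<le> \<rho>^5"
    using \<rho> by (simp add: one_le_power)
  with N3 show "1 \<le> N"
    by simp
qed

lemma coeff_weight_ge:
  assumes "1 \<le> \<rho>" "1 \<le> N"
  shows "1 / \<rho>^n \<le> coeff_weight N \<rho> n"
  using assms by (simp add: coeff_weight_def divide_right_mono one_le_power)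

lemma coeff_weight_le:
  assumes "1 \<le> \<rho>" "1 \<le> N"
  shows "coeff_weight N \<rho> n \<le> real N ^ N / \<rho>^n"
  using assms by (simp add: coeff_weight_def divide_right_mono power_increasing)

lemma coeff_weight_gain:
  assumes \<rho>: "1 \<le> \<rho>" and \<beta>: "0 \<le> \<beta>" "\<beta> * \<rho>^j \<le> real N" and "0 < j"
    and Q: "1 \<le> Q" "real k + 1 \<le> Q"
  shows "\<beta> * coeff_weight N \<rho> k \<le> Q * coeff_weight N \<rho> (k + j)"
proof -
  have split: "\<rho>^(k + j) = \<rho>^k * \<rho>^j"
    by (simp add: power_add)
  have gain: "(if k < N then real N else 1) * coeff_weight N \<rho> k \<le> \<rho>^j * coeff_weight N \<rho> (k + j)"
  proof (cases "k < N")
    case True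
    have "real N * real N ^ k \<le> real N ^ min (k + j) N"
      using True \<open>0 < j\<close> by (simp flip: power_Suc) (intro power_increasing; simp)
    then show ?thesis
      using True \<rho> by (simp add: coeff_weight_def split divide_right_mono)
  next
    case False
    then show ?thesis
      using \<rho> by (simp add: coeff_weight_def split)
  qed
  have "\<beta> * \<rho>^j \<le> Q * (if k < N then real N else 1)"
  proof (cases "k < N")
    case True
    have "1 * real N \<le> Q * real N"
      using Q by (intro mult_right_mono) auto
    then show ?thesis
      using True order_trans[OF \<beta>(2)] by simp
  next
    case False
    then show ?thesis
      using \<beta> Q by simp
  qed
  then have "\<beta> * \<rho>^j * coeff_weight N \<rho> k \<le> Q * (if k < N then real N else 1) * coeff_weight N \<rho> k"
    by (rule mult_right_mono) (use \<rho> in \<open>simp add: coeff_weight_def\<close>)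
  also have "\<dots> = Q * ((if k < N then real N else 1) * coeff_weight N \<rho> k)"
    by (simp only: mult.assoc)
  also have "\<dots> \<le> Q * (\<rho>^j * coeff_weight N \<rho> (k + j))"
    using gain Q by (intro mult_left_mono) auto
  finally show ?thesis
    using \<rho> by (simp add: mult_ac)
qed

lemma norm_fps_mult_nth_le:
  fixes f g :: "'a::real_normed_div_algebra fps"
  assumes "0 < \<rho>"
    and f: "\<And>k. k \<le> n \<Longrightarrow> norm (fps_nth f k) \<le> A / \<rho>^k"
    and g: "\<And>k. k \<le> n \<Longrightarrow> norm (fps_nth g k) \<le> B / \<rho>^k"
  shows "norm (fps_nth (f * g) n) \<le> (real n + 1) * (A * B) / \<rho>^n"
proof -
  have "norm (fps_nth (f * g) n) \<le> (\<Sum>i=0..n. norm (fps_nth f i) * norm (fps_nth g (n - i)))"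
    unfolding fps_mult_nth by (rule order_trans[OF norm_sum]) (simp add: norm_mult)
  also have "\<dots> \<le> (\<Sum>i=0..n. A / \<rho>^i * (B / \<rho>^(n - i)))"
    using f g by (intro sum_mono mult_mono) (auto intro: order_trans[OF norm_ge_zero])
  also have "\<dots> = (\<Sum>i=0..n. A * B / \<rho>^n)"
    using \<open>0 < \<rho>\<close> by (intro sum.cong) (auto simp flip: power_add)
  finally show ?thesis
    by (simp add: add.commute)
qed

lemma norm_fps_cube_nth_le:
  fixes f :: "'a::real_normed_div_algebra fps"
  assumes "0 < \<rho>" and f: "\<And>k. k \<le> n \<Longrightarrow> norm (fps_nth f k) \<le> B / \<rho>^k"
  shows "norm (fps_nth (f ^ 3) n) \<le> (real n + 1)^2 * B^3 / \<rho>^n"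
proof -
  have "norm (fps_nth (f * f) k) \<le> (real n + 1) * B^2 / \<rho>^k" if "k \<le> n" for k
  proof -
    have "norm (fps_nth (f * f) k) \<le> (real k + 1) * (B * B) / \<rho>^k"
      using that by (intro norm_fps_mult_nth_le \<open>0 < \<rho>\<close> f) auto
    also have "\<dots> \<le> (real n + 1) * B^2 / \<rho>^k"
      using that \<open>0 < \<rho>\<close>
      by (intro divide_right_mono) (auto simp: power2_eq_square intro!: mult_right_mono)
    finally show ?thesis .
  qed
  then have "norm (fps_nth (f * (f * f)) n) \<le> (real n + 1) * (B * ((real n + 1) * B^2)) / \<rho>^n"
    by (intro norm_fps_mult_nth_le \<open>0 < \<rho>\<close> f) auto
  then show ?thesis
    by (simp add: numeral_3_eq_3 power2_eq_square mult_ac)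
qed

lemma pochhammer_4_ge:
  "(real n + 1)^2 \<le> pochhammer (real n + 1) 4" "real n + 1 \<le> pochhammer (real n + 1) 4"
  "1 \<le> pochhammer (real n + 1) 4"
proof -
  have "(real n + 1)^2 \<le> (real n + 1) * (real n + 1 + 1) * (real n + 1 + 2) * (real n + 1 + 3)"
    by (simp add: power2_eq_square algebra_simps)
  then show sq: "(real n + 1)^2 \<le> pochhammer (real n + 1) 4"
    by (simp add: pochhammer_Suc numeral_eq_Suc algebra_simps)
  have "real n + 1 \<le> (real n + 1)^2"
    by (simp add: power2_eq_square)
  with sq show "real n + 1 \<le> pochhammer (real n + 1) 4" "1 \<le> pochhammer (real n + 1) 4"
    by auto
qed

lemma norm_fps_cube_nth_weight_le:
  fixes F :: "'a::real_normed_div_algebra fps"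
  assumes const: "majorant_constants \<rho> \<alpha> N C" and "0 \<le> \<alpha>"
    and F: "\<And>k. k \<le> m \<Longrightarrow> norm (fps_nth F k) \<le> C * coeff_weight N \<rho> k"
  shows "3 * norm (fps_nth (F ^ 3) m) \<le> pochhammer (real m + 1) 4 * (C * coeff_weight N \<rho> (m + 4))"
proof -
  note \<rho> = majorant_constantsD(1)[OF const \<open>0 \<le> \<alpha>\<close>] and C = majorant_constantsD(2,3)[OF const \<open>0 \<le> \<alpha>\<close>]
    and N = majorant_constantsD(6)[OF const \<open>0 \<le> \<alpha>\<close>]
  define P where "P = pochhammer (real m + 1) 4"
  have "norm (fps_nth F k) \<le> C * real N ^ N / \<rho>^k" if "k \<le> m" for k
    using order_trans[OF F[OF that] mult_left_mono[OF coeff_weight_le[OF \<rho> N] C(1)]] by simp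
  then have "3 * norm (fps_nth (F ^ 3) m) \<le> 3 * ((real m + 1)^2 * (C * real N ^ N)^3 / \<rho>^m)"
    using \<rho> by (intro mult_left_mono norm_fps_cube_nth_le) auto
  also have "\<dots> = (real m + 1)^2 * C * (3 * C^2 * real N ^ (3*N) * \<rho>^4) / \<rho>^(m + 4)"
    using \<rho> by (simp add: power_add power_mult_distrib power_mult[of _ N 3] mult.commute[of 3 N]
        power2_eq_square power3_eq_cube field_simps)
  also have "\<dots> \<le> P * C * 1 / \<rho>^(m + 4)"
    using C \<rho> pochhammer_4_ge(1,3)[of m]
    by (intro mult_mono divide_right_mono mult_right_mono) (auto simp: P_def)
  also have "\<dots> = P * (C * (1 / \<rho>^(m + 4)))"
    by simp
  also have "\<dots> \<le> P * (C * coeff_weight N \<rho> (m + 4))"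
    using coeff_weight_ge[OF \<rho> N] C pochhammer_4_ge(3)[of m] by (intro mult_left_mono) (auto simp: P_def)
  finally show ?thesis
    by (simp add: P_def)
qed

lemma norm_ode_coeff_linear_terms_le:
  fixes p :: "'a::real_normed_field"
  assumes const: "majorant_constants \<rho> \<alpha> N C" and p: "norm p \<le> \<alpha>"
    and IH: "\<And>k. k \<le> m \<Longrightarrow> norm (ode_coeff p d k) \<le> C * coeff_weight N \<rho> k"
  shows "3 * norm (p * ode_coeff p d m) \<le> pochhammer (real m + 1) 4 * (C * coeff_weight N \<rho> (m + 4))"
    "3 * norm (fps_nth (fps_X * ode_fps p d) m)
      \<le> pochhammer (real m + 1) 4 * (C * coeff_weight N \<rho> (m + 4))"
proof -
  have "0 \<le> \<alpha>"
    using p norm_ge_zero order_trans by blast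
  note bounds = majorant_constantsD[OF const this]
  let ?w = "coeff_weight N \<rho>" and ?P = "pochhammer (real m + 1) 4"
  have "\<alpha> * \<rho>^4 \<le> (\<alpha> + 1) * \<rho>^5"
    using bounds(1) \<open>0 \<le> \<alpha>\<close> by (intro mult_mono) (auto intro: power_increasing)
  then have "3 * \<alpha> * \<rho>^4 \<le> 3 * \<rho>^5 * (\<alpha> + 1)"
    by (simp add: mult_ac)
  then have "3 * \<alpha> * ?w m \<le> ?P * ?w (m + 4)"
    using bounds(1,4) \<open>0 \<le> \<alpha>\<close> pochhammer_4_ge[of m] by (intro coeff_weight_gain) auto
  moreover have "norm (p * ode_coeff p d m) \<le> \<alpha> * (C * ?w m)"
    unfolding norm_mult using p IH[of m] \<open>0 \<le> \<alpha>\<close> by (intro mult_mono) auto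
  ultimately show "3 * norm (p * ode_coeff p d m) \<le> ?P * (C * ?w (m + 4))"
    using bounds(2) mult_left_mono[of "3 * \<alpha> * ?w m" "?P * ?w (m + 4)" C] by (simp add: mult_ac)
  show "3 * norm (fps_nth (fps_X * ode_fps p d) m) \<le> ?P * (C * ?w (m + 4))"
  proof (cases "m = 0")
    case True
    then show ?thesis
      using bounds(1,2) pochhammer_4_ge(3)[of m] by (simp add: coeff_weight_def)
  next
    case False
    then have "m + 4 = m - 1 + 5"
      by simp
    then have gain: "3 * ?w (m - 1) \<le> ?P * ?w (m + 4)"
      using False bounds(1,5) pochhammer_4_ge[of m] by (simp only:) (intro coeff_weight_gain; simp)
    have "3 * norm (ode_coeff p d (m - 1)) \<le> C * (3 * ?w (m - 1))"
      using IH[of "m - 1"] by simp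
    also have "\<dots> \<le> C * (?P * ?w (m + 4))"
      using gain bounds(2) by (rule mult_left_mono)
    also have "\<dots> = ?P * (C * ?w (m + 4))"
      by (rule mult.left_commute)
    finally show ?thesis
      using False by (simp add: ode_fps_def)
  qed
qed

lemma norm_ode_coeff_add_4_le:
  fixes p :: "'a::real_normed_field"
  assumes const: "majorant_constants \<rho> \<alpha> N C" and p: "norm p \<le> \<alpha>"
    and IH: "\<And>k. k \<le> m \<Longrightarrow> norm (ode_coeff p d k) \<le> C * coeff_weight N \<rho> k"
  shows "norm (ode_coeff p d (m + 4)) \<le> C * coeff_weight N \<rho> (m + 4)"
proof -
  let ?w = "coeff_weight N \<rho>" and ?P = "pochhammer (real m + 1) 4"
  have "0 \<le> \<alpha>"
    using p norm_ge_zero order_trans by blast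
  then have cube: "3 * norm (fps_nth (ode_fps p d ^ 3) m) \<le> ?P * (C * ?w (m + 4))"
    using IH by (intro norm_fps_cube_nth_weight_le[OF const]) (simp_all add: ode_fps_def)
  have "pochhammer (of_nat (m + 1)) 4 = (of_real ?P :: 'a)"
    by (simp add: add.commute flip: pochhammer_of_real)
  then have "?P * norm (ode_coeff p d (m + 4)) = norm (pochhammer (of_nat (m + 1)) 4 * ode_coeff p d (m + 4))"
    using pochhammer_4_ge(3)[of m] by (simp add: norm_mult)
  also have "\<dots> = norm (fps_nth (ode_fps p d ^ 3) m + p * ode_coeff p d m + fps_nth (fps_X * ode_fps p d) m)"
    unfolding ode_coeff_recurrence by (rule norm_minus_cancel)
  also have "\<dots> \<le> norm (fps_nth (ode_fps p d ^ 3) m) + norm (p * ode_coeff p d m)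
      + norm (fps_nth (fps_X * ode_fps p d) m)"
    by (intro order_trans[OF norm_triangle_ineq] add_right_mono norm_triangle_ineq)
  also have "\<dots> \<le> ?P * (C * ?w (m + 4))"
    using cube norm_ode_coeff_linear_terms_le[where m = m, OF const p IH] by linarith
  finally show ?thesis
    using pochhammer_4_ge(3)[of m] by simp
qed

lemma norm_ode_coeff_le:
  fixes p :: "'a::real_normed_field"
  assumes const: "majorant_constants \<rho> \<alpha> N C" and p: "norm p \<le> \<alpha>"
    and d: "\<And>k. k < 4 \<Longrightarrow> norm (d k) \<le> C / \<rho>^3"
  shows "norm (ode_coeff p d n) \<le> C * coeff_weight N \<rho> n"
proof (induction n rule: less_induct)
  case (less n)
  have "0 \<le> \<alpha>"
    using p norm_ge_zero order_trans by blast
  note bounds = majorant_constantsD[OF const this]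
  show ?case
  proof (cases "n < 4")
    case True
    have "norm (ode_coeff p d n) \<le> norm (d n)"
      using True by (simp add: ode_coeff_initial norm_divide divide_le_eq mult_le_cancel_left1)
    also have "\<dots> \<le> C / \<rho>^3"
      using True by (rule d)
    also have "\<dots> \<le> C * (1 / \<rho>^n)"
      using True bounds(1,2) by (simp add: divide_left_mono power_increasing)
    also have "\<dots> \<le> C * coeff_weight N \<rho> n"
      using coeff_weight_ge[OF bounds(1,6)] bounds(2) by (rule mult_left_mono)
    finally show ?thesis .
  next
    case False
    then obtain m where n: "n = m + 4"
      by (metis add.commute le_Suc_ex not_less)
    have "norm (ode_coeff p d k) \<le> C * coeff_weight N \<rho> k" if "k \<le> m" for k
      using less[of k] that n by simp
    then show ?thesis
      unfolding n by (rule norm_ode_coeff_add_4_le[OF const p])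
  qed
qed

lemma norm_ode_coeff_term_le:
  fixes p :: "'a::real_normed_field"
  assumes const: "majorant_constants \<rho> \<alpha> N C" and p: "norm p \<le> \<alpha>"
    and d: "\<And>k. k < 4 \<Longrightarrow> norm (d k) \<le> C / \<rho>^3" and w: "norm w \<le> K"
  shows "norm (ode_coeff p d n * w^n) \<le> C * real N ^ N * (K / \<rho>)^n"
proof -
  have "0 \<le> \<alpha>"
    using p norm_ge_zero order_trans by blast
  note bounds = majorant_constantsD[OF const this]
  have "norm (ode_coeff p d n) \<le> C * (real N ^ N / \<rho>^n)"
    using order_trans[OF norm_ode_coeff_le[OF const p d]
        mult_left_mono[OF coeff_weight_le[OF bounds(1,6)] bounds(2)]]
    by simp
  then have "norm (ode_coeff p d n * w^n) \<le> C * (real N ^ N / \<rho>^n) * K^n"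
    unfolding norm_mult norm_power using w bounds(1,2) by (intro mult_mono power_mono) auto
  then show ?thesis
    by (simp add: power_divide)
qed

lemma ode_fps_conv_radius_ge:
  fixes p :: "'a::{real_normed_field,banach}"
  assumes "majorant_constants \<rho> \<alpha> N C" and "norm p \<le> \<alpha>"
    and "\<And>k. k < 4 \<Longrightarrow> norm (d k) \<le> C / \<rho>^3"
  shows "ereal \<rho> \<le> fps_conv_radius (ode_fps p d)"
  unfolding fps_conv_radius_def
proof (rule conv_radius_geI_ex')
  fix r :: real
  assume "0 < r" "ereal r < ereal \<rho>"
  then have "summable (\<lambda>n. C * real N ^ N * (r / \<rho>)^n)"
    by (intro summable_mult summable_geometric) auto
  moreover have "norm (fps_nth (ode_fps p d) n * of_real r ^ n) \<le> C * real N ^ N * (r / \<rho>)^n" for n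
    using norm_ode_coeff_term_le[OF assms, where w = "of_real r" and K = r and n = n] \<open>0 < r\<close>
    by (simp add: ode_fps_def)
  ultimately show "summable (\<lambda>n. fps_nth (ode_fps p d) n * of_real r ^ n)"
    by (rule summable_comparison_test')
qed

section \<open>The power series solves the equation\<close>

definition ode_solution :: "real \<Rightarrow> (nat \<Rightarrow> real) \<Rightarrow> nat \<Rightarrow> real \<Rightarrow> real" where
  "ode_solution p d k z = eval_fps ((fps_deriv ^^ k) (ode_fps p d)) (z - p)"

lemma fps_conv_radius_higher_deriv:
  fixes f :: "'a::{banach,real_normed_field} fps"
  shows "fps_conv_radius f \<le> fps_conv_radius ((fps_deriv ^^ k) f)"
proof (induction k)
  case (Suc k)
  then show ?case
    using order.trans[OF Suc.IH fps_conv_radius_deriv] by simp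
qed simp

lemma ode_solution_at_center: "k < 4 \<Longrightarrow> ode_solution p d k p = d k"
  by (simp add: ode_solution_def eval_fps_at_0 fps_0th_higher_deriv ode_fps_def ode_coeff_initial)

lemma ode_solution_has_real_derivative:
  assumes "ereal \<bar>z - p\<bar> < fps_conv_radius (ode_fps p d)"
  shows "(ode_solution p d k has_real_derivative ode_solution p d (Suc k) z) (at z within I)"
proof -
  have "ereal (norm (z - p)) < fps_conv_radius ((fps_deriv ^^ k) (ode_fps p d))"
    using assms fps_conv_radius_higher_deriv by (auto intro: less_le_trans)
  then have "(eval_fps ((fps_deriv ^^ k) (ode_fps p d)) has_real_derivative
      eval_fps ((fps_deriv ^^ Suc k) (ode_fps p d)) (z - p)) (at (z - p))"
    by (simp add: has_field_derivative_eval_fps)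
  from DERIV_chain2[OF this DERIV_diff[OF DERIV_ident DERIV_const]]
  show ?thesis
    unfolding ode_solution_def by (simp add: has_field_derivative_at_within)
qed

lemma ode_solution_fourth_derivative:
  assumes "ereal \<bar>z - p\<bar> < fps_conv_radius (ode_fps p d)"
  shows "ode_solution p d 4 z = - ode_solution p d 0 z * ((ode_solution p d 0 z)^2 + z)"
proof -
  let ?F = "ode_fps p d" and ?w = "z - p"
  have F: "ereal (norm ?w) < fps_conv_radius ?F"
    using assms by simp
  have radii: "ereal (norm ?w) < fps_conv_radius (?F ^ 3)"
    "ereal (norm ?w) < fps_conv_radius (fps_const p * ?F)"
    "ereal (norm ?w) < fps_conv_radius (fps_X * ?F)"
    using F fps_conv_radius_power[of ?F 3] fps_conv_radius_mult[of "fps_const p" ?F]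
      fps_conv_radius_mult[of fps_X ?F]
    by (auto intro: less_le_trans)
  have radius_sum: "ereal (norm ?w) < fps_conv_radius (?F ^ 3 + fps_const p * ?F)"
    using radii less_le_trans[OF _ fps_conv_radius_add[of "?F ^ 3" "fps_const p * ?F"]] by simp
  then have "ereal (norm ?w) < fps_conv_radius (?F ^ 3 + fps_const p * ?F + fps_X * ?F)"
    using radii less_le_trans[OF _ fps_conv_radius_add[of "?F ^ 3 + fps_const p * ?F" "fps_X * ?F"]]
    by simp
  then have "ode_solution p d 4 z = - eval_fps (?F ^ 3 + fps_const p * ?F + fps_X * ?F) ?w"
    unfolding ode_solution_def ode_fps_solves_ode by (rule eval_fps_minus)
  also have "\<dots> = - (eval_fps (?F ^ 3) ?w + eval_fps (fps_const p * ?F) ?w + eval_fps (fps_X * ?F) ?w)"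
    by (simp only: eval_fps_add[OF radius_sum radii(3)] eval_fps_add[OF radii(1,2)])
  also have "\<dots> = - (eval_fps ?F ?w ^ 3 + p * eval_fps ?F ?w + ?w * eval_fps ?F ?w)"
  proof -
    have "eval_fps (fps_const p * ?F) ?w = p * eval_fps ?F ?w"
      using F by (subst eval_fps_mult) auto
    moreover have "eval_fps (fps_X * ?F) ?w = ?w * eval_fps ?F ?w"
      using F by (subst eval_fps_mult) auto
    ultimately show ?thesis
      by (simp only: eval_fps_power[OF F])
  qed
  finally show ?thesis
    by (simp add: ode_solution_def power2_eq_square power3_eq_cube algebra_simps)
qed

lemma solves_on_ode_solution:
  assumes "\<And>z. z \<in> I \<Longrightarrow> ereal \<bar>z - p\<bar> < fps_conv_radius (ode_fps p d)"
  shows "solves_on (ode_solution p d 0) (ode_solution p d 1) (ode_solution p d 2)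
    (ode_solution p d 3) I"
  unfolding solves_on_def
proof (intro ballI conjI)
  fix z
  assume "z \<in> I"
  note deriv = ode_solution_has_real_derivative[OF assms[OF this]]
  show "(ode_solution p d 0 has_real_derivative ode_solution p d 1 z) (at z within I)"
    using deriv[of 0] by simp
  show "(ode_solution p d 1 has_real_derivative ode_solution p d 2 z) (at z within I)"
    using deriv[of 1] by (simp add: numeral_2_eq_2)
  show "(ode_solution p d 2 has_real_derivative ode_solution p d 3 z) (at z within I)"
    using deriv[of 2] by (simp add: numeral_3_eq_3)
  have "Suc 3 = (4::nat)"
    by simp
  with deriv[of 3] show "(ode_solution p d 3 has_real_derivative
      - ode_solution p d 0 z * ((ode_solution p d 0 z)\<^sup>2 + z)) (at z within I)"
    by (simp only: ode_solution_fourth_derivative[OF assms[OF \<open>z \<in> I\<close>]])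
qed

lemma solves_on_ode_solution_majorant:
  assumes "majorant_constants \<rho> \<alpha> N C" and "\<bar>p\<bar> \<le> \<alpha>" and "\<And>k. k < 4 \<Longrightarrow> \<bar>d k\<bar> \<le> C / \<rho>^3"
    and "\<And>z. z \<in> I \<Longrightarrow> \<bar>z - p\<bar> < \<rho>"
  shows "solves_on (ode_solution p d 0) (ode_solution p d 1) (ode_solution p d 2)
    (ode_solution p d 3) I"
proof (rule solves_on_ode_solution)
  fix z
  assume "z \<in> I"
  then have "ereal \<bar>z - p\<bar> < ereal \<rho>"
    using assms(4) by simp
  also have "\<dots> \<le> fps_conv_radius (ode_fps p d)"
    using assms(1-3) by (intro ode_fps_conv_radius_ge) auto
  finally show "ereal \<bar>z - p\<bar> < fps_conv_radius (ode_fps p d)" .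
qed

section \<open>Real analytic dependence on parameters\<close>

lemma real_analytic_at_Re_holomorphic:
  fixes G :: "complex \<Rightarrow> complex"
  assumes hol: "G holomorphic_on ball (of_real x0) r" and "0 < r"
    and eq: "\<And>y. \<bar>y - x0\<bar> < r \<Longrightarrow> Re (G (of_real y)) = f y"
  shows "real_analytic_at f x0"
  unfolding real_analytic_at_def
proof (intro exI conjI allI impI)
  fix y
  assume y: "\<bar>y - x0\<bar> < r"
  then have y_ball: "of_real y \<in> ball (of_real x0 :: complex) r"
    by (simp add: dist_norm abs_minus_commute flip: of_real_diff)
  have Re_scale: "Re (c * of_real t) = Re c * t" for c t
    by simp
  from sums_Re[OF holomorphic_power_series[OF hol y_ball]]
  show "(\<lambda>n. Re ((deriv ^^ n) G (of_real x0) / fact n) * (y - x0)^n) sums f y"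
    unfolding eq[OF y] of_real_diff[symmetric] of_real_power[symmetric] Re_scale .
qed fact


lemma real_analytic_at_suminf:
  fixes t :: "nat \<Rightarrow> complex \<Rightarrow> complex" and f :: "nat \<Rightarrow> real \<Rightarrow> real"
  assumes "0 < r" and hol: "\<And>n. t n holomorphic_on ball (of_real x0) r"
    and "summable h" and bound: "\<And>n x. x \<in> ball (of_real x0) r \<Longrightarrow> norm (t n x) \<le> h n"
    and real: "\<And>n y. \<bar>y - x0\<bar> < r \<Longrightarrow> t n (of_real y) = of_real (f n y)"
  shows "real_analytic_at (\<lambda>y. \<Sum>n. f n y) x0"
proof -
  let ?S = "ball (of_real x0 :: complex) r"
  have deriv: "(t n has_field_derivative deriv (t n) x) (at x)" if "x \<in> ?S" for n x
    using holomorphic_derivI[OF hol open_ball that] .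
  have uniform: "\<forall>\<^sub>F n in sequentially. \<forall>x\<in>?S. norm (t n x) \<le> h n"
    using bound by (intro always_eventually) auto
  obtain g g' where g: "\<forall>x\<in>?S. (\<lambda>n. t n x) sums g x \<and> (\<lambda>n. deriv (t n) x) sums g' x
      \<and> (g has_field_derivative g' x) (at x)"
    by (rule series_and_derivative_comparison[OF open_ball \<open>summable h\<close> deriv uniform])
  have "g holomorphic_on ?S"
    using g by (auto simp: holomorphic_on_open)
  then show ?thesis
  proof (rule real_analytic_at_Re_holomorphic[OF _ \<open>0 < r\<close>])
    fix y
    assume y: "\<bar>y - x0\<bar> < r"
    then have "of_real y \<in> ?S"
      by (simp add: dist_norm abs_minus_commute flip: of_real_diff)
    with g have "(\<lambda>n. t n (of_real y)) sums g (of_real y)"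
      by blast
    from sums_Re[OF this] show "Re (g (of_real y)) = (\<Sum>n. f n y)"
      using real[OF y] by (simp add: sums_iff)
  qed
qed

lemma eventually_norm_less_holomorphic:
  assumes "f holomorphic_on U" "open U" "x0 \<in> U" "norm (f x0) < c"
  shows "\<forall>\<^sub>F x in nhds x0. norm (f x) < c"
proof -
  have "isCont f x0"
    using holomorphic_on_imp_continuous_on[OF assms(1)] assms(2,3) continuous_on_eq_continuous_at by blast
  then have "(f \<longlongrightarrow> f x0) (nhds x0)"
    unfolding isCont_def tendsto_at_iff_tendsto_nhds .
  from order_tendstoD(2)[OF tendsto_norm[OF this] assms(4)] show ?thesis .
qed

lemma ode_solution_real_analytic_on_ball:
  fixes P :: "complex \<Rightarrow> complex" and D :: "complex \<Rightarrow> nat \<Rightarrow> complex"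
  assumes const: "majorant_constants \<rho> \<alpha> N C" and "0 < r" and "K < \<rho>"
    and hol: "P holomorphic_on ball (of_real y0) r"
      "\<And>k. k < 4 \<Longrightarrow> (\<lambda>x. D x k) holomorphic_on ball (of_real y0) r"
    and real: "\<And>y. \<bar>y - y0\<bar> < r \<Longrightarrow> P (of_real y) = of_real (p y)"
      "\<And>y. \<bar>y - y0\<bar> < r \<Longrightarrow> D (of_real y) = (\<lambda>k. of_real (d y k))"
    and bounds: "\<And>x. x \<in> ball (of_real y0) r \<Longrightarrow> norm (P x) \<le> \<alpha>"
      "\<And>x k. x \<in> ball (of_real y0) r \<Longrightarrow> k < 4 \<Longrightarrow> norm (D x k) \<le> C / \<rho>^3"
      "\<And>x. x \<in> ball (of_real y0) r \<Longrightarrow> norm (of_real z - P x) \<le> K"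
  shows "real_analytic_at (\<lambda>y. ode_solution (p y) (d y) 0 z) y0"
  unfolding ode_solution_def ode_fps_def eval_fps_def funpow_0 fps_nth_Abs_fps
proof (rule real_analytic_at_suminf[OF \<open>0 < r\<close>])
  show "(\<lambda>x. ode_coeff (P x) (D x) n * (of_real z - P x)^n) holomorphic_on ball (of_real y0) r" for n
    using hol by (intro holomorphic_intros holomorphic_on_ode_coeff)
  have "norm (of_real z - P (of_real y0)) \<le> K"
    using bounds(3) \<open>0 < r\<close> by simp
  then have "0 \<le> K"
    using norm_ge_zero order_trans by blast
  then show "summable (\<lambda>n. C * real N ^ N * (K / \<rho>)^n)"
    using \<open>K < \<rho>\<close> by (intro summable_mult summable_geometric) auto
  show "norm (ode_coeff (P x) (D x) n * (of_real z - P x)^n) \<le> C * real N ^ N * (K / \<rho>)^n"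
    if "x \<in> ball (of_real y0) r" for n x
    using bounds that by (intro norm_ode_coeff_term_le[OF const]) auto
  show "ode_coeff (P (of_real y)) (D (of_real y)) n * (of_real z - P (of_real y))^n
      = of_real (ode_coeff (p y) (d y) n * (z - p y)^n)" if "\<bar>y - y0\<bar> < r" for n y
    using real[OF that] ode_coeff_of_real[of "p y" "d y" n, where 'a = complex] by simp
qed

lemma ode_solution_real_analytic_in_parameters:
  fixes P :: "complex \<Rightarrow> complex" and D :: "complex \<Rightarrow> nat \<Rightarrow> complex"
  assumes const: "majorant_constants \<rho> \<alpha> N C"
    and U: "open U" "of_real y0 \<in> U"
    and hol: "P holomorphic_on U" "\<And>k. k < 4 \<Longrightarrow> (\<lambda>x. D x k) holomorphic_on U"
    and real: "\<And>y. of_real y \<in> U \<Longrightarrow> P (of_real y) = of_real (p y)"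
      "\<And>y k. of_real y \<in> U \<Longrightarrow> D (of_real y) k = of_real (d y k)"
    and at_y0: "norm (P (of_real y0)) < \<alpha>" "\<And>k. k < 4 \<Longrightarrow> norm (D (of_real y0) k) < C / \<rho>^3"
      "norm (of_real z - P (of_real y0)) < \<rho>"
  shows "real_analytic_at (\<lambda>y. ode_solution (p y) (d y) 0 z) y0"
proof -
  define K where "K = (norm (of_real z - P (of_real y0)) + \<rho>) / 2"
  have K: "norm (of_real z - P (of_real y0)) < K" "K < \<rho>"
    using at_y0(3) by (auto simp: K_def)
  have hol_diff: "(\<lambda>x. of_real z - P x) holomorphic_on U"
    using hol(1) by (intro holomorphic_intros)
  have "\<forall>\<^sub>F x in nhds (of_real y0). norm (P x) < \<alpha>"
    by (rule eventually_norm_less_holomorphic[OF hol(1) U at_y0(1)])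
  moreover have "\<forall>\<^sub>F x in nhds (of_real y0). \<forall>k\<in>{..<4}. norm (D x k) < C / \<rho>^3"
    using hol(2) U at_y0(2) by (intro eventually_ball_finite ballI eventually_norm_less_holomorphic) auto
  moreover have "\<forall>\<^sub>F x in nhds (of_real y0). norm (of_real z - P x) < K"
    by (rule eventually_norm_less_holomorphic[OF hol_diff U K(1)])
  ultimately have "\<forall>\<^sub>F x in nhds (of_real y0). x \<in> U \<and> norm (P x) < \<alpha>
      \<and> (\<forall>k\<in>{..<4}. norm (D x k) < C / \<rho>^3) \<and> norm (of_real z - P x) < K"
    using eventually_nhds_in_open[OF U] by (intro eventually_conj)
  then obtain r where "0 < r"
    and near: "\<And>x. x \<in> ball (of_real y0) r \<Longrightarrow> x \<in> U \<and> norm (P x) < \<alpha>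
      \<and> (\<forall>k\<in>{..<4}. norm (D x k) < C / \<rho>^3) \<and> norm (of_real z - P x) < K"
    unfolding eventually_nhds_metric by (auto simp: dist_commute)
  then have ball_U: "ball (of_real y0) r \<subseteq> U"
    by blast
  have real_ball: "of_real y \<in> U" if "\<bar>y - y0\<bar> < r" for y
    using ball_U that by (auto simp: dist_norm abs_minus_commute simp flip: of_real_diff)
  have real_fun: "D (of_real y) = (\<lambda>k. of_real (d y k))" if "\<bar>y - y0\<bar> < r" for y
    using real(2)[OF real_ball[OF that]] by (simp add: fun_eq_iff)
  have "P holomorphic_on ball (of_real y0) r"
    using hol(1) ball_U by (rule holomorphic_on_subset)
  moreover have "(\<lambda>x. D x k) holomorphic_on ball (of_real y0) r" if "k < 4" for k
    using hol(2)[OF that] ball_U by (rule holomorphic_on_subset)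
  ultimately show ?thesis
  proof (rule ode_solution_real_analytic_on_ball[OF const \<open>0 < r\<close> K(2)])
    show "P (of_real y) = of_real (p y)" if "\<bar>y - y0\<bar> < r" for y
      using real(1)[OF real_ball[OF that]] .
    show "norm (P x) \<le> \<alpha>" "norm (of_real z - P x) \<le> K" if "x \<in> ball (of_real y0) r" for x
      using near[OF that] by simp_all
    show "norm (D x k) \<le> C / \<rho>^3" if "x \<in> ball (of_real y0) r" "k < 4" for x k
      using near[OF that(1)] that(2) by (meson lessThan_iff less_imp_le)
  qed (use real_fun in auto)
qed

section \<open>The scale and the initial data\<close>

definition initial_data :: "real \<Rightarrow> real \<Rightarrow> real \<Rightarrow> nat \<Rightarrow> real" where
  "initial_data a x10 x20 k =
     a powr (real (k + 2) / 4) * [x10, - (x10 + x20) / sqrt 2, x20, (x10 - x20) / sqrt 2] ! k"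

lemma initial_data_values:
  assumes "0 < a"
  shows "initial_data a x10 x20 0 = a powr (1/2) * x10"
    "initial_data a x10 x20 1 = - (a powr (3/4) / sqrt 2) * (x10 + x20)"
    "initial_data a x10 x20 2 = a * x20"
    "initial_data a x10 x20 3 = (a powr (5/4) / sqrt 2) * (x10 - x20)"
  using assms by (auto simp: initial_data_def field_simps)

lemma initial_data_uniformly_small:
  assumes "0 < \<epsilon>"
  shows "\<exists>k1>0. \<forall>x10 x20 a k. norm (x10, x20) \<le> k1 \<longrightarrow> 0 < a \<longrightarrow> a \<le> A \<longrightarrow> k < 4
    \<longrightarrow> \<bar>initial_data a x10 x20 k\<bar> < \<epsilon>"
proof -
  define M where "M = max 1 A"
  have M: "1 \<le> M"
    by (simp add: M_def)
  define k1 where "k1 = \<epsilon> / (4 * M^2)"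
  have "0 < k1"
    using assms M by (simp add: k1_def)
  moreover have "\<bar>initial_data a x10 x20 k\<bar> < \<epsilon>"
    if x: "norm (x10, x20) \<le> k1" and a: "0 < a" "a \<le> A" and k: "k < 4" for x10 x20 a k
  proof -
    have "a powr (real (k + 2) / 4) \<le> M powr (real (k + 2) / 4)"
      using a by (intro powr_mono2) (auto simp: M_def)
    also have "\<dots> \<le> M powr 2"
      using M k by (intro powr_mono) auto
    finally have a_pow: "a powr (real (k + 2) / 4) \<le> M^2"
      using M by (simp add: powr_numeral)
    have sqrt2: "\<bar>t / sqrt 2\<bar> \<le> \<bar>t\<bar>" for t
      by (simp add: abs_divide divide_le_eq mult_le_cancel_left1)
    have "\<bar>[x10, - (x10 + x20) / sqrt 2, x20, (x10 - x20) / sqrt 2] ! k\<bar> \<le> \<bar>x10\<bar> + \<bar>x20\<bar>"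
      using k sqrt2[of "- (x10 + x20)"] sqrt2[of "x10 - x20"]
      by (auto simp: less_Suc_eq numeral_eq_Suc)
    also have "\<dots> \<le> 2 * k1"
      using x norm_fst_le[of x10 x20] norm_snd_le[of x20 x10] by auto
    finally have "\<bar>[x10, - (x10 + x20) / sqrt 2, x20, (x10 - x20) / sqrt 2] ! k\<bar> \<le> 2 * k1" .
    then have "\<bar>initial_data a x10 x20 k\<bar> \<le> M^2 * (2 * k1)"
      unfolding initial_data_def abs_mult using a_pow by (intro mult_mono) auto
    also have "\<dots> < \<epsilon>"
      using assms M by (simp add: k1_def)
    finally show ?thesis .
  qed
  ultimately show ?thesis
    by blast
qed

lemma a_scale_pos:
  assumes "0 < \<delta>" "0 < \<nu>"
  shows "0 < a_scale \<delta> \<nu>"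
proof -
  have "0 < (1 + \<delta>^2) * \<delta> / (8 * \<nu>^2)"
    using assms by (intro divide_pos_pos mult_pos_pos add_pos_nonneg) auto
  then show ?thesis
    unfolding a_scale_def powr_gt_zero by (metis less_irrefl)
qed

lemma a_scale_mono:
  assumes "0 \<le> \<delta>" "\<delta> \<le> \<delta>'"
  shows "a_scale \<delta> \<nu> \<le> a_scale \<delta>' \<nu>"
proof -
  have "(1 + \<delta>^2) * \<delta> \<le> (1 + \<delta>'^2) * \<delta>'"
    using assms by (intro mult_mono add_left_mono power_mono) auto
  then show ?thesis
    unfolding a_scale_def using assms by (intro powr_mono2 divide_right_mono) auto
qed


lemma a_scale_powr_holomorphic_extension:
  assumes "0 < \<nu>"
  obtains U :: "complex set" and E :: "real \<Rightarrow> complex \<Rightarrow> complex"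
  where "open U" "\<And>\<delta>. 0 < \<delta> \<Longrightarrow> of_real \<delta> \<in> U" "\<And>s. E s holomorphic_on U"
    "\<And>s y. of_real y \<in> U \<Longrightarrow> E s (of_real y) = of_real (a_scale y \<nu> powr s)"
proof
  define b where "b \<delta> = (1 + \<delta>^2) * \<delta> / (8 * \<nu>^2)" for \<delta> :: real
  define B where "B x = (1 + x^2) * x / of_real (8 * \<nu>^2)" for x :: complex
  define U where "U = {x. B x \<notin> \<real>\<^sub>\<le>\<^sub>0}"
  have B_real: "B (of_real y) = of_real (b y)" for y
    by (simp add: B_def b_def)
  have "closed (B -` \<real>\<^sub>\<le>\<^sub>0)"
    unfolding B_def using assms by (intro continuous_closed_vimage closed_nonpos_Reals_complex continuous_intros) auto
  then show "open U"
    unfolding U_def by (simp add: open_Collect_neg vimage_def)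
  show "of_real \<delta> \<in> U" if "0 < \<delta>" for \<delta>
  proof -
    have "0 < b \<delta>"
      unfolding b_def using that assms by (intro divide_pos_pos mult_pos_pos add_pos_nonneg) auto
    then show ?thesis
      by (simp add: U_def B_real complex_nonpos_Reals_iff)
  qed
  show "(\<lambda>x. B x powr of_real (2/5 * s)) holomorphic_on U" for s
    unfolding U_def B_def using assms by (intro holomorphic_intros) auto
  show "B (of_real y) powr of_real (2/5 * s) = of_real (a_scale y \<nu> powr s)" if "of_real y \<in> U" for s y
  proof -
    have "0 < b y"
      using that by (auto simp: U_def B_real complex_nonpos_Reals_iff)
    then show ?thesis
      unfolding B_real powr_of_real[OF less_imp_le[OF \<open>0 < b y\<close>]]
      by (simp add: a_scale_def b_def powr_powr)
  qed
qed

lemma ode_solution_a_scale_real_analytic: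
  assumes "0 < \<nu>" "0 < \<delta>0" and const: "majorant_constants \<rho> \<alpha> N C"
    and "a_scale \<delta>0 \<nu> < \<alpha>" and "\<And>k. k < 4 \<Longrightarrow> \<bar>initial_data (a_scale \<delta>0 \<nu>) x10 x20 k\<bar> < C / \<rho>^3"
    and "\<bar>z - a_scale \<delta>0 \<nu>\<bar> < \<rho>"
  shows "real_analytic_at (\<lambda>\<delta>. ode_solution (a_scale \<delta> \<nu>) (initial_data (a_scale \<delta> \<nu>) x10 x20) 0 z) \<delta>0"
proof -
  obtain U E where U: "open U" "of_real \<delta>0 \<in> U" and hol: "\<And>s. E s holomorphic_on U"
    and E: "\<And>s y. of_real y \<in> U \<Longrightarrow> E s (of_real y) = of_real (a_scale y \<nu> powr s)"
    using a_scale_powr_holomorphic_extension[OF \<open>0 < \<nu>\<close>] \<open>0 < \<delta>0\<close> by metis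
  define v where "v = [x10, - (x10 + x20) / sqrt 2, x20, (x10 - x20) / sqrt 2]"
  define D where "D x k = E (real (k + 2) / 4) x * of_real (v ! k)" for x k
  have P_real: "E 1 (of_real y) = of_real (a_scale y \<nu>)" if "of_real y \<in> U" for y
    using E[OF that, of 1] by (simp add: a_scale_def)
  have D_real: "D (of_real y) k = of_real (initial_data (a_scale y \<nu>) x10 x20 k)" if "of_real y \<in> U" for y k
    using E[OF that] by (simp add: D_def initial_data_def v_def)
  have "0 < a_scale \<delta>0 \<nu>"
    using assms(2,1) by (rule a_scale_pos)
  show ?thesis
  proof (rule ode_solution_real_analytic_in_parameters[OF const U, where P = "E 1" and D = D])
    show "E 1 holomorphic_on U"
      by (rule hol)
    show "(\<lambda>x. D x k) holomorphic_on U" for k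
      unfolding D_def by (intro holomorphic_intros hol)
    show "E 1 (of_real y) = of_real (a_scale y \<nu>)" if "of_real y \<in> U" for y
      by (rule P_real[OF that])
    show "D (of_real y) k = of_real (initial_data (a_scale y \<nu>) x10 x20 k)" if "of_real y \<in> U" for y k
      by (rule D_real[OF that])
    show "norm (E 1 (of_real \<delta>0)) < \<alpha>"
      using assms(4) \<open>0 < a_scale \<delta>0 \<nu>\<close> by (simp add: P_real[OF U(2)])
    show "norm (D (of_real \<delta>0) k) < C / \<rho>^3" if "k < 4" for k
      using assms(5)[OF that] by (simp add: D_real[OF U(2)])
    show "norm (of_real z - E 1 (of_real \<delta>0)) < \<rho>"
      using assms(6) by (simp add: P_real[OF U(2)] flip: of_real_diff)
  qed
qed

lemma ode_solution_initial_value_problem: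
  assumes const: "majorant_constants \<rho> \<alpha> N C" and a: "0 < a" "a \<le> \<alpha>" and "0 \<le> a'" "a + a' < \<rho>"
    and data: "\<And>k. k < 4 \<Longrightarrow> \<bar>initial_data a x10 x20 k\<bar> \<le> C / \<rho>^3"
  shows "\<exists>A1 A2 A3. solves_on (ode_solution a (initial_data a x10 x20) 0) A1 A2 A3 {-a'..a}
    \<and> ode_solution a (initial_data a x10 x20) 0 a = a powr (1/2) * x10
    \<and> A1 a = - (a powr (3/4) / sqrt 2) * (x10 + x20)
    \<and> A2 a = a * x20
    \<and> A3 a = (a powr (5/4) / sqrt 2) * (x10 - x20)"
proof -
  let ?d = "initial_data a x10 x20"
  have "solves_on (ode_solution a ?d 0) (ode_solution a ?d 1) (ode_solution a ?d 2)
      (ode_solution a ?d 3) {-a'..a}"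
    using assms by (intro solves_on_ode_solution_majorant[OF const]) auto
  then show ?thesis
    using a initial_data_values[of a x10 x20] ode_solution_at_center[of _ a ?d]
    by (intro exI[of _ "ode_solution a ?d 1"] exI[of _ "ode_solution a ?d 2"]
        exI[of _ "ode_solution a ?d 3"]) simp
qed

theorem lemma12:
  fixes \<nu>m \<nu>p :: real
  assumes "\<nu>m > 0" and "\<nu>p > 0"
  shows "\<exists>k1>0. \<forall>x10 x20 :: real. norm (x10, x20) \<le> k1 \<longrightarrow>
    (\<exists>A :: real \<Rightarrow> real \<Rightarrow> real.
      (\<forall>\<delta>\<in>{1/3..1}.
         let ap = a_scale \<delta> \<nu>p; am = a_scale \<delta> \<nu>m in
         \<exists>A1 A2 A3. solves_on (A \<delta>) A1 A2 A3 {-am..ap}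
           \<and> A \<delta> ap = ap powr (1/2) * x10
           \<and> A1 ap = - (ap powr (3/4) / sqrt 2) * (x10 + x20)
           \<and> A2 ap = ap * x20
           \<and> A3 ap = (ap powr (5/4) / sqrt 2) * (x10 - x20))
      \<and> (\<forall>\<delta>0\<in>{1/3..1}. \<forall>z\<in>{- a_scale \<delta>0 \<nu>m .. a_scale \<delta>0 \<nu>p}.
           real_analytic_at (\<lambda>\<delta>. A \<delta> z) \<delta>0))"
proof -
  define P Q where "P = a_scale 1 \<nu>p" and "Q = a_scale 1 \<nu>m"
  define \<rho> where "\<rho> = P + Q + 2"
  have scale: "0 < a_scale \<delta> \<nu>" "a_scale \<delta> \<nu> \<le> a_scale 1 \<nu>" if "\<delta> \<in> {1/3..1}" "0 < \<nu>" for \<delta> \<nu>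
    using that a_scale_pos[of \<delta> \<nu>] a_scale_mono[of \<delta> 1 \<nu>] by auto
  then have "0 < P" "0 < Q"
    using assms by (auto simp: P_def Q_def)
  then have "1 \<le> \<rho>"
    by (simp add: \<rho>_def)
  then obtain N C where const: "majorant_constants \<rho> (P + 1) N C" and "0 < C"
    using majorant_constants_exist by blast
  then obtain k1 where "0 < k1" and small: "\<And>x10 x20 a k. norm (x10, x20) \<le> k1 \<Longrightarrow> 0 < a \<Longrightarrow> a \<le> P
      \<Longrightarrow> k < 4 \<Longrightarrow> \<bar>initial_data a x10 x20 k\<bar> < C / \<rho>^3"
    using initial_data_uniformly_small[of "C / \<rho>^3" P] \<open>1 \<le> \<rho>\<close> by auto
  show ?thesis
  proof (intro exI[of _ k1] conjI allI impI \<open>0 < k1\<close>, goal_cases)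
    case (1 x10 x20)
    have data: "\<bar>initial_data (a_scale \<delta> \<nu>p) x10 x20 k\<bar> < C / \<rho>^3" if "\<delta> \<in> {1/3..1}" "k < 4" for \<delta> k
      using small[OF 1] scale[OF that(1) assms(2)] that(2) by (simp add: P_def)
    show ?case
    proof (intro exI[of _ "\<lambda>\<delta>. ode_solution (a_scale \<delta> \<nu>p) (initial_data (a_scale \<delta> \<nu>p) x10 x20) 0"]
        conjI ballI, goal_cases)
      case (1 \<delta>)
      then show ?case
        using scale[OF 1 assms(1)] scale[OF 1 assms(2)] data[OF 1] unfolding Let_def
        by (intro ode_solution_initial_value_problem[OF const]) (auto simp: P_def Q_def \<rho>_def intro: less_imp_le)
    next
      case (2 \<delta>0 z)
      then show ?case
        using scale[OF 2(1) assms(1)] scale[OF 2(1) assms(2)] data[OF 2(1)]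
        by (intro ode_solution_a_scale_real_analytic[OF assms(2) _ const]) (auto simp: P_def Q_def \<rho>_def)
    qed
  qed
qed

end
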